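(* Let $\alpha\ne0$ be a nonzero square in $\mathbb{F}_p$ and let $\omega$ be the integer with $1\le\omega\le\frac{p-1}{2}$ and $\omega^2\equiv\alpha\pmod p$. Then in the block $A_\alpha$ of $\mathcal{U}_0(\mathfrak{sl}_2)$ we have $e^{p-\omega}(c-\alpha)=0$ (i.e. $\pi_\alpha e^{p-\omega}(c-\alpha)=0$).
   Context: Let $k$ be an algebraically closed field of characteristic $p>2$, $\mathfrak{sl}_2=\mathfrak{sl}_2(k)$ with standard basis $e,f,h$, and $\mathcal{U}_0(\mathfrak{sl}_2)=\mathcal{U}(\mathfrak{sl}_2)/\langle e^p,f^p,h^p-h\rangle$. $c=(h-1)^2+4ef$ is central. $\mathcal{U}_0(\mathfrak{sl}_2)=\bigoplus_\alpha A_\alpha$ is the block decomposition, $A_\alpha=\pi_\alpha\mathcal{U}_0(\mathfrak{sl}_2)$ with central idempotents $\pi_\alpha$, where $\alpha\in\mathbb{F}_p$ is the scalar by which $c$ acts on the simple modules of the block. *)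

theory Defs
  imports "HOL-Computational_Algebra.Polynomial"
begin

definition k_algebra_map :: "('k::field \<Rightarrow> 'a::ring_1) \<Rightarrow> bool" where
  "k_algebra_map \<phi> \<longleftrightarrow> \<phi> 1 = 1 \<and> (\<forall>x y. \<phi> (x + y) = \<phi> x + \<phi> y)
      \<and> (\<forall>x y. \<phi> (x * y) = \<phi> x * \<phi> y) \<and> (\<forall>x a. \<phi> x * a = a * \<phi> x)"

inductive_set subalg_gen :: "('k \<Rightarrow> 'a::ring_1) \<Rightarrow> 'a set \<Rightarrow> 'a set" for \<phi> S where
  scal: "\<phi> x \<in> subalg_gen \<phi> S"
| gen: "s \<in> S \<Longrightarrow> s \<in> subalg_gen \<phi> S"
| add: "a \<in> subalg_gen \<phi> S \<Longrightarrow> b \<in> subalg_gen \<phi> S \<Longrightarrow> a + b \<in> subalg_gen \<phi> S"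
| mult: "a \<in> subalg_gen \<phi> S \<Longrightarrow> b \<in> subalg_gen \<phi> S \<Longrightarrow> a * b \<in> subalg_gen \<phi> S"

text \<open>The universal such algebra is
  U_0(sl_2) itself; every other one is a quotient of it.\<close>
definition U0_sl2_alg :: "nat \<Rightarrow> ('k::field \<Rightarrow> 'a::ring_1) \<Rightarrow> 'a \<Rightarrow> 'a \<Rightarrow> 'a \<Rightarrow> bool" where
  "U0_sl2_alg p \<phi> e f h \<longleftrightarrow> k_algebra_map \<phi>
     \<and> subalg_gen \<phi> {e, f, h} = UNIV
     \<and> e * f - f * e = h \<and> h * e - e * h = 2 * e \<and> h * f - f * h = - (2 * f)
     \<and> e ^ p = 0 \<and> f ^ p = 0 \<and> h ^ p = h"

definition casimir :: "'a::ring_1 \<Rightarrow> 'a \<Rightarrow> 'a \<Rightarrow> 'a" where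
  "casimir e f h = (h - 1)^2 + 4 * e * f"

text \<open>The block idempotent \<pi>_\<alpha>: the central idempotent cutting out the sum of the blocks
  on whose simple modules c acts by the scalar \<alpha>, i.e. the central idempotent z such that
  c - \<alpha> is nilpotent on zA and invertible on (1-z)A.\<close>
definition block_idem :: "'a::ring_1 \<Rightarrow> 'a \<Rightarrow> 'a \<Rightarrow> int \<Rightarrow> 'a" where
  "block_idem e f h \<alpha> = (THE z. z * z = z \<and> (\<forall>x. z * x = x * z)
      \<and> (\<exists>N::nat. (casimir e f h - of_int \<alpha>) ^ N * z = 0)
      \<and> (\<exists>y. (casimir e f h - of_int \<alpha>) * y = 1 - z))"

end

theory Submission
  imports Defs "HOL-Number_Theory.Cong"
begin

text \<open>
  Since \<open>h\<^sup>p = h\<close>, the elements \<open>\<delta>(a) = 1 - (h - a)\<^bsup>p-1\<^esup>\<close> for \<open>a \<in> F\<^sub>p\<close> split the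
  algebra into \<open>h\<close>-weight spaces: \<open>h \<delta>(a) = a \<delta>(a)\<close>, \<open>\<Sum>\<^sub>a \<delta>(a) = 1\<close> and
  \<open>\<delta>(a) f = f \<delta>(a + 2)\<close>. As \<open>4ef = c - (h - 1)\<^sup>2\<close> with \<open>c\<close> central, this gives
  \<open>(4e)\<^sup>k f\<^sup>k \<delta>(a) = R(a,k)(c) \<delta>(a)\<close> where \<open>R(a,k) = \<Prod>\<^sub>j\<^sub><\<^sub>k (X - (a - 1 - 2j)\<^sup>2)\<close>.

  For \<open>k = p\<close> the values \<open>a - 1 - 2j\<close> run through all of \<open>F\<^sub>p\<close>, so \<open>e\<^sup>p = 0\<close> yields
  \<open>K(c) = 0\<close> for \<open>K = \<Prod>\<^sub>s (X - s\<^sup>2) = (X - \<alpha>)\<^sup>2 Q\<close> with \<open>Q(\<alpha>) \<noteq> 0\<close>; a Bezout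
  relation \<open>u (X - \<alpha>)\<^sup>2 + v Q = 1\<close> then identifies \<open>\<pi>\<^sub>\<alpha>\<close> with \<open>v(c) Q(c)\<close>.
  For \<open>k = \<omega>\<close> the \<open>\<omega>\<close> values \<open>a - 1 - 2j\<close> never contain both \<open>\<omega>\<close> and \<open>-\<omega>\<close>, so
  \<open>R(a,\<omega>)\<close> divides \<open>(X - \<alpha>) Q\<close>, and \<open>e\<^bsup>p-\<omega>\<^esup> e\<^sup>\<omega> = 0\<close> yields
  \<open>e\<^bsup>p-\<omega>\<^esup> (c - \<alpha>) Q(c) = 0\<close>, hence \<open>\<pi>\<^sub>\<alpha> e\<^bsup>p-\<omega>\<^esup> (c - \<alpha>) = 0\<close>.
\<close>

lemma numeral_mult_commute: "numeral n * (x::'a::ring_1) = x * numeral n"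
  by (metis mult_of_nat_commute of_nat_numeral)

lemma numeral_power_mult_commute: "numeral n ^ k * (x::'a::ring_1) = x * numeral n ^ k"
  by (metis mult_of_nat_commute of_nat_numeral of_nat_power)

lemma mult_numeral_left_commute: "(x::'a::ring_1) * (numeral n * y) = numeral n * (x * y)"
  by (metis mult.assoc numeral_mult_commute)

lemma power_mult_commuting:
  fixes x y :: "'a::monoid_mult"
  assumes "x * y = y * x"
  shows "(x * y) ^ n = x ^ n * y ^ n"
proof (induction n)
  case (Suc n)
  have "y * x ^ n = x ^ n * y"
    using power_commuting_commutes[OF assms] by simp
  then show ?case
    by (simp add: Suc mult.assoc flip: mult.assoc[of y])
qed simp

lemma idempotent_power_Suc: "q * q = (q::'a::monoid_mult) \<Longrightarrow> q ^ Suc n = q"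
  by (induction n) (simp_all add: mult.assoc flip: power_Suc2)

section \<open>Block idempotents\<close>

definition block_idempotent :: "'a::ring_1 \<Rightarrow> 'a \<Rightarrow> bool" where
  "block_idempotent t z \<longleftrightarrow> z * z = z \<and> (\<forall>x. z * x = x * z)
     \<and> (\<exists>N. t ^ N * z = 0) \<and> (\<exists>y. t * y = 1 - z)"

lemma block_idempotent_absorb:
  assumes t: "\<And>x. t * x = x * t"
    and z: "block_idempotent t z" and z': "block_idempotent t z'"
  shows "z * z' = z"
proof -
  obtain N where N: "t ^ N * z = 0" and z_central: "\<And>x. z * x = x * z"
    using z unfolding block_idempotent_def by blast
  obtain y where y: "t * y = 1 - z'" and "z' * z' = z'"
    using z' unfolding block_idempotent_def by blast
  then have "(1 - z') * (1 - z') = 1 - z'"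
    by (simp add: algebra_simps)
  then have "1 - z' = (t * y) ^ Suc N"
    by (simp only: y idempotent_power_Suc)
  also have "\<dots> = t ^ N * (t * y ^ Suc N)"
    by (simp only: power_mult_commuting[OF t] power_Suc2[of t] mult.assoc)
  finally have "z * (1 - z') = (t ^ N * z) * (t * y ^ Suc N)"
    by (metis z_central mult.assoc)
  then show ?thesis
    by (simp add: N right_diff_distrib)
qed

lemma block_idempotent_unique:
  assumes "\<And>x. t * x = x * t" and "block_idempotent t z" and "block_idempotent t z'"
  shows "z = z'"
proof -
  have "z = z * z'"
    using block_idempotent_absorb assms by metis
  also have "\<dots> = z' * z"
    using \<open>block_idempotent t z\<close> by (simp add: block_idempotent_def)
  also have "\<dots> = z'"
    using block_idempotent_absorb assms by metis
  finally show ?thesis .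
qed

lemma block_idem_eqI:
  assumes "\<And>x. casimir e f h * x = x * casimir e f h"
    and "block_idempotent (casimir e f h - of_int \<alpha>) z"
  shows "block_idem e f h \<alpha> = z"
proof -
  have "(casimir e f h - of_int \<alpha>) * x = x * (casimir e f h - of_int \<alpha>)" for x
    using assms(1) by (simp add: algebra_simps mult_of_int_commute)
  then show ?thesis
    unfolding block_idem_def block_idempotent_def[symmetric]
    using assms(2) by (blast intro: the_equality block_idempotent_unique)
qed

section \<open>The prime subring in prime characteristic\<close>

abbreviation prime_subring :: "'a::ring_1 set" where
  "prime_subring \<equiv> range of_int"

lemma of_int_power_CHAR:
  assumes "prime CHAR('a::comm_ring_1)"
  shows "(of_int m :: 'a) ^ CHAR('a) = of_int m"
proof (induction m rule: int_induct[of _ 0])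
  case base
  show ?case
    using prime_gt_0_nat[OF assms] by (simp add: power_0_left)
next
  case (step1 i)
  then show ?case
    using freshmans_dream[OF assms refl, of "of_int i" 1] by simp
next
  case (step2 i)
  then show ?case
    using freshmans_dream[OF assms refl, of "of_int i" "-1"]
      minus_power_prime_CHAR[OF refl assms, of 1] by simp
qed

lemma prime_subring_eq_of_nat_image:
  assumes "CHAR('a::ring_1) > 0"
  shows "(prime_subring :: 'a set) = of_nat ` {..<CHAR('a)}"
proof (intro equalityI subsetI)
  fix x :: 'a assume "x \<in> prime_subring"
  then obtain m where "x = of_int m" by auto
  also have "\<dots> = of_int (m mod int CHAR('a))"
    by (simp add: of_int_eq_iff_cong_CHAR cong_def)
  also have "\<dots> = of_nat (nat (m mod int CHAR('a)))"
    using assms by simp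
  finally have "x = of_nat (nat (m mod int CHAR('a)))" .
  moreover have "nat (m mod int CHAR('a)) < CHAR('a)"
    using assms by (simp add: nat_less_iff)
  ultimately show "x \<in> of_nat ` {..<CHAR('a)}"
    by blast
next
  fix x :: 'a assume "x \<in> of_nat ` {..<CHAR('a)}"
  then show "x \<in> prime_subring"
    by (auto intro: range_eqI[of _ _ "int _"])
qed

lemma inj_on_of_nat_CHAR: "inj_on (of_nat :: nat \<Rightarrow> 'a::ring_1) {..<CHAR('a)}"
  by (auto intro!: inj_onI cong_less_modulus_unique_nat simp: of_nat_eq_iff_cong_CHAR)

lemma finite_prime_subring:
  "CHAR('a::ring_1) > 0 \<Longrightarrow> finite (prime_subring :: 'a set)"
  by (simp add: prime_subring_eq_of_nat_image)

lemma card_prime_subring: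
  "CHAR('a::ring_1) > 0 \<Longrightarrow> card (prime_subring :: 'a set) = CHAR('a)"
  by (simp add: prime_subring_eq_of_nat_image card_image inj_on_of_nat_CHAR)

lemma uminus_prime_subring_remove:
  "uminus ` (prime_subring - {w}) = (prime_subring - {- w} :: 'a::ring_1 set)"
proof (intro equalityI subsetI)
  fix x :: 'a assume "x \<in> uminus ` (prime_subring - {w})"
  then obtain m where "x = - of_int m" and "of_int m \<noteq> w"
    by auto
  then show "x \<in> prime_subring - {- w}"
    by (auto intro: range_eqI[of _ _ "- m"])
next
  fix x :: 'a assume "x \<in> prime_subring - {- w}"
  then have "- x \<in> prime_subring - {w}"
    by (auto simp flip: of_int_minus)
  then show "x \<in> uminus ` (prime_subring - {w})"
    by (rule rev_image_eqI) simp
qed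

lemma prime_subring_power_CHAR_minus_1:
  assumes "prime CHAR('a::field)" and "x \<in> prime_subring" and "x \<noteq> (0::'a)"
  shows "x ^ (CHAR('a) - 1) = 1"
proof -
  have "x * x ^ (CHAR('a) - 1) = x * 1"
    using assms of_int_power_CHAR[OF assms(1)] prime_gt_0_nat[OF assms(1)]
    by (auto simp flip: power_Suc)
  then show ?thesis
    using assms(3) by simp
qed

lemma linear_poly_power_CHAR:
  fixes a :: "'a::comm_ring_1"
  assumes "prime CHAR('a)" and "a \<in> prime_subring"
  shows "[:-a, 1:] ^ CHAR('a) = [:-a:] + [:0, 1:] ^ CHAR('a)"
proof -
  obtain m where "-a = of_int m"
    using assms(2) by (metis of_int_minus rangeE)
  then have "(-a) ^ CHAR('a) = -a"
    by (simp only: of_int_power_CHAR[OF assms(1)])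
  moreover have "[:-a, 1:] = [:-a:] + [:0, 1::'a:]"
    by simp
  ultimately show ?thesis
    using freshmans_dream[where x = "[:-a:]" and y = "[:0, 1:]"] assms(1)
    by (simp add: poly_const_pow)
qed

text \<open>By Fermat, \<open>1 - (X - a)\<^bsup>p-1\<^esup>\<close> is the Lagrange basis polynomial of \<open>a\<close> on \<open>F\<^sub>p\<close>.\<close>

lemma sum_prime_subring_lagrange:
  assumes "prime CHAR('a::field)"
  shows "(\<Sum>a\<in>prime_subring. 1 - [:-a, 1:] ^ (CHAR('a) - 1)) = (1 :: 'a poly)"
proof (rule poly_eqI_degree[where A = prime_subring])
  have p: "CHAR('a) > 1"
    using assms prime_gt_1_nat by blast
  then show "card (prime_subring :: 'a set) > degree (1 :: 'a poly)"
    by (simp add: card_prime_subring)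
  have fin: "finite (prime_subring :: 'a set)"
    using p by (simp add: finite_prime_subring)
  have "degree (\<Sum>a\<in>prime_subring. 1 - [:-a, 1::'a:] ^ (CHAR('a) - 1)) \<le> CHAR('a) - 1"
    by (intro degree_sum_le order.trans[OF degree_diff_le_max])
      (auto intro: order.trans[OF degree_power_le] simp: fin)
  then show "card (prime_subring :: 'a set) >
      degree (\<Sum>a\<in>prime_subring. 1 - [:-a, 1::'a:] ^ (CHAR('a) - 1))"
    using p by (simp add: card_prime_subring)
  fix b :: 'a assume b: "b \<in> prime_subring"
  have "poly (1 - [:-a, 1:] ^ (CHAR('a) - 1)) b = (if a = b then 1 else 0)"
    if "a \<in> prime_subring" for a
  proof -
    have "b - a \<in> prime_subring"
      using b that by (auto intro: range_eqI[of _ _ "_ - _"])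
    then show ?thesis
      using p prime_subring_power_CHAR_minus_1[OF assms, of "b - a"] by simp
  qed
  then show "poly (\<Sum>a\<in>prime_subring. 1 - [:-a, 1:] ^ (CHAR('a) - 1)) b = poly 1 b"
      using b fin by (simp add: poly_sum)
qed

section \<open>Evaluating polynomials in a \<open>k\<close>-algebra\<close>

locale k_algebra =
  fixes \<phi> :: "'k::field \<Rightarrow> 'a::ring_1"
  assumes algebra_map: "k_algebra_map \<phi>"
begin

lemma map_1 [simp]: "\<phi> 1 = 1"
  and map_add [simp]: "\<phi> (x + y) = \<phi> x + \<phi> y"
  and map_mult [simp]: "\<phi> (x * y) = \<phi> x * \<phi> y"
  and map_central: "\<phi> x * b = b * \<phi> x"
  using algebra_map unfolding k_algebra_map_def by blast+

lemma map_0 [simp]: "\<phi> 0 = 0"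
  using map_add[of 0 0] by (simp only: add_0_left add_cancel_right_right)

lemma map_uminus [simp]: "\<phi> (- x) = - \<phi> x"
  using map_add[of "- x" x] by (simp add: eq_neg_iff_add_eq_0)

lemma map_diff [simp]: "\<phi> (x - y) = \<phi> x - \<phi> y"
  using map_add[of x "- y"] by simp

lemma map_of_nat [simp]: "\<phi> (of_nat n) = of_nat n"
  by (induction n) simp_all

lemma map_of_int [simp]: "\<phi> (of_int m) = of_int m"
  by (cases m) simp_all

lemma map_numeral [simp]: "\<phi> (numeral n) = numeral n"
  using map_of_nat[of "numeral n"] by simp

lemma map_power [simp]: "\<phi> (x ^ n) = \<phi> x ^ n"
  by (induction n) simp_all

text \<open>As \<open>\<phi>\<close> has central image, \<open>P \<mapsto> P(x)\<close> is a ring homomorphism for every \<open>x\<close>,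
  although the algebra is not commutative.\<close>

definition aeval :: "'a \<Rightarrow> 'k poly \<Rightarrow> 'a" where
  "aeval x P = (\<Sum>i\<le>degree P. \<phi> (coeff P i) * x ^ i)"

lemma aeval_eq_sum:
  assumes "degree P \<le> n"
  shows "aeval x P = (\<Sum>i\<le>n. \<phi> (coeff P i) * x ^ i)"
  unfolding aeval_def
  by (rule sum.mono_neutral_left) (use assms in \<open>auto simp: coeff_eq_0\<close>)

lemma aeval_0 [simp]: "aeval x 0 = 0"
  by (simp add: aeval_def)

lemma aeval_add [simp]: "aeval x (P + Q) = aeval x P + aeval x Q"
proof -
  let ?n = "max (degree P) (degree Q)"
  have "aeval x (P + Q) = (\<Sum>i\<le>?n. \<phi> (coeff (P + Q) i) * x ^ i)"
    by (rule aeval_eq_sum) (simp add: degree_add_le)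
  also have "\<dots> = (\<Sum>i\<le>?n. \<phi> (coeff P i) * x ^ i) + (\<Sum>i\<le>?n. \<phi> (coeff Q i) * x ^ i)"
    by (simp add: distrib_right sum.distrib)
  also have "\<dots> = aeval x P + aeval x Q"
    using aeval_eq_sum[of P ?n x] aeval_eq_sum[of Q ?n x] by simp
  finally show ?thesis .
qed

lemma aeval_pCons [simp]: "aeval x (pCons a P) = \<phi> a + aeval x P * x"
proof -
  have "aeval x (pCons a P) = (\<Sum>i\<le>Suc (degree P). \<phi> (coeff (pCons a P) i) * x ^ i)"
    by (rule aeval_eq_sum) (simp add: degree_pCons_le)
  also have "\<dots> = \<phi> a + (\<Sum>i\<le>degree P. \<phi> (coeff P i) * x ^ Suc i)"
    by (subst sum.atMost_Suc_shift) simp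
  also have "\<dots> = \<phi> a + aeval x P * x"
    by (simp add: aeval_def sum_distrib_right mult.assoc power_commutes)
  finally show ?thesis .
qed

lemma aeval_1 [simp]: "aeval x 1 = 1"
  by (simp add: one_pCons)

lemma aeval_linear: "aeval x [:-a, 1:] = x - \<phi> a"
  by simp

lemma aeval_uminus [simp]: "aeval x (- P) = - aeval x P"
  by (induction P) (simp_all add: algebra_simps)

lemma aeval_diff [simp]: "aeval x (P - Q) = aeval x P - aeval x Q"
  using aeval_add[of x P "- Q"] by simp

lemma aeval_smult [simp]: "aeval x (smult a P) = \<phi> a * aeval x P"
  by (induction P) (simp_all add: distrib_left mult.assoc)

lemma aeval_commute:
  assumes "x * y = y * x"
  shows "aeval x P * y = y * aeval x P"
proof (induction P)
  case (pCons a P)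
  have "aeval x P * x * y = y * aeval x P * x"
    by (metis pCons.IH assms mult.assoc)
  then show ?case
    by (simp add: distrib_left distrib_right map_central[of a y] mult.assoc)
qed simp

lemma aeval_mult [simp]: "aeval x (P * Q) = aeval x P * aeval x Q"
proof (induction P)
  case (pCons a P)
  have "aeval x (pCons a P * Q) = \<phi> a * aeval x Q + aeval x P * (aeval x Q * x)"
    by (simp add: pCons.IH mult.assoc)
  also have "aeval x Q * x = x * aeval x Q"
    by (rule aeval_commute) simp
  also have "\<phi> a * aeval x Q + aeval x P * (x * aeval x Q) = aeval x (pCons a P) * aeval x Q"
    by (simp add: distrib_right mult.assoc)
  finally show ?case .
qed simp

lemma aeval_power [simp]: "aeval x (P ^ n) = aeval x P ^ n"
  by (induction n) simp_all

lemma aeval_sum: "aeval x (\<Sum>i\<in>A. P i) = (\<Sum>i\<in>A. aeval x (P i))"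
  by (induction A rule: infinite_finite_induct) simp_all

lemma block_idempotent_aeval:
  assumes x_central: "\<And>y. x * y = y * x"
    and bezout: "u * L\<^sup>2 + v * Q = 1" and annihilated: "aeval x (L\<^sup>2 * Q) = 0"
  shows "block_idempotent (aeval x L) (aeval x (v * Q))"
proof -
  have vQ: "1 - u * L\<^sup>2 = v * Q"
    using bezout by (metis add_diff_cancel_left')
  have "v * Q * (v * Q) = v * Q * (1 - u * L\<^sup>2)"
    by (simp only: vQ)
  also have "\<dots> = v * Q - (u * v) * (L\<^sup>2 * Q)"
    by (simp add: algebra_simps)
  finally have "aeval x (v * Q) * aeval x (v * Q)
      = aeval x (v * Q) - aeval x (u * v) * aeval x (L\<^sup>2 * Q)"
    by (metis aeval_mult aeval_diff)
  then have idem: "aeval x (v * Q) * aeval x (v * Q) = aeval x (v * Q)"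
    by (simp only: annihilated mult_zero_right diff_zero)
  have "L\<^sup>2 * (v * Q) = v * (L\<^sup>2 * Q)"
    by (simp add: algebra_simps)
  then have "aeval x L ^ 2 * aeval x (v * Q) = aeval x v * aeval x (L\<^sup>2 * Q)"
    by (metis aeval_mult aeval_power)
  then have nil: "aeval x L ^ 2 * aeval x (v * Q) = 0"
    by (simp only: annihilated mult_zero_right)
  have "L * (u * L) = 1 - v * Q"
    using vQ by (simp add: algebra_simps power2_eq_square)
  then have unit: "aeval x L * aeval x (u * L) = 1 - aeval x (v * Q)"
    by (metis aeval_mult aeval_diff aeval_1)
  show ?thesis
    unfolding block_idempotent_def using idem nil unit aeval_commute[OF x_central] by blast
qed

end

section \<open>The Casimir element\<close>

locale sl2_triple =
  fixes e f h :: "'a::ring_1"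
  assumes ef_comm: "e * f - f * e = h"
    and he_comm: "h * e - e * h = 2 * e"
    and hf_comm: "h * f - f * h = - (2 * f)"
begin

lemma he_reorder: "h * e = e * h + 2 * e"
  and fh_reorder: "f * h = h * f + 2 * f"
  using he_comm hf_comm by (simp_all add: algebra_simps)

lemma h_minus_1_e: "(h - 1) * e = e * (h + 1)"
  by (simp add: algebra_simps he_reorder mult_2)

lemma h_plus_1_f: "(h + 1) * f = f * (h - 1)"
  using hf_comm by (simp add: algebra_simps mult_2)

lemma square_h_plus_1: "(h + 1)\<^sup>2 = (h - 1)\<^sup>2 + 4 * h"
proof -
  have "4 * h = (h + h) + (h + h)"
    by (metis distrib_right mult_2 numeral_Bit0)
  then show ?thesis
    by (simp add: power2_eq_square algebra_simps)
qed

lemma casimir_eq_fe: "casimir e f h = (h + 1)\<^sup>2 + 4 * f * e"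
proof -
  have "casimir e f h = (h - 1)\<^sup>2 + 4 * h + 4 * f * e"
    using ef_comm by (simp add: casimir_def mult.assoc distrib_left algebra_simps)
  then show ?thesis
    by (simp only: square_h_plus_1)
qed

lemma casimir_commute_e: "casimir e f h * e = e * casimir e f h"
proof -
  have "casimir e f h * e = (h - 1)\<^sup>2 * e + 4 * (e * (f * e))"
    by (simp add: casimir_def distrib_right mult.assoc)
  also have "\<dots> = e * ((h + 1)\<^sup>2 + 4 * f * e)"
    by (simp add: distrib_left mult.assoc mult_numeral_left_commute)
      (metis h_minus_1_e mult.assoc power2_eq_square)
  finally show ?thesis
    by (simp only: casimir_eq_fe)
qed

lemma casimir_commute_f: "casimir e f h * f = f * casimir e f h"
proof -
  have "casimir e f h * f = (h + 1)\<^sup>2 * f + 4 * (f * (e * f))"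
    by (simp add: casimir_eq_fe distrib_right mult.assoc)
  also have "\<dots> = f * ((h - 1)\<^sup>2 + 4 * e * f)"
    by (simp add: distrib_left mult.assoc mult_numeral_left_commute)
      (metis h_plus_1_f mult.assoc power2_eq_square)
  finally show ?thesis
    by (simp only: casimir_def)
qed

lemma casimir_commute_h: "casimir e f h * h = h * casimir e f h"
proof -
  have "h * (e * f) = (e * h + 2 * e) * f"
    by (simp add: he_reorder flip: mult.assoc)
  also have "\<dots> = e * (h * f + 2 * f)"
    by (simp add: distrib_right distrib_left mult.assoc mult_numeral_left_commute)
  also have "\<dots> = e * f * h"
    by (simp add: fh_reorder mult.assoc)
  finally show ?thesis
    by (simp add: casimir_def power2_eq_square algebra_simps mult_numeral_left_commute)
qed

end

section \<open>Polynomials vanishing at squares of weights\<close>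

definition prod_sq_poly :: "'a::comm_ring_1 set \<Rightarrow> 'a poly" where
  "prod_sq_poly S = (\<Prod>s\<in>S. [:-(s\<^sup>2), 1:])"

definition ef_power_poly :: "'a::comm_ring_1 \<Rightarrow> nat \<Rightarrow> 'a poly" where
  "ef_power_poly a k = (\<Prod>j<k. [:-((a - 1 - 2 * of_nat j)\<^sup>2), 1:])"

lemma ef_power_poly_Suc:
  "ef_power_poly a (Suc k) = [:-((a - 1)\<^sup>2), 1:] * ef_power_poly (a - 2) k"
  unfolding ef_power_poly_def prod.lessThan_Suc_shift by (simp add: algebra_simps)

lemma prod_sq_poly_remove:
  "finite S \<Longrightarrow> s \<in> S \<Longrightarrow> prod_sq_poly S = [:-(s\<^sup>2), 1:] * prod_sq_poly (S - {s})"
  by (simp add: prod_sq_poly_def prod.remove)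

lemma prod_sq_poly_dvd: "finite T \<Longrightarrow> S \<subseteq> T \<Longrightarrow> prod_sq_poly S dvd prod_sq_poly T"
  by (simp add: prod_sq_poly_def prod_dvd_prod_subset)

lemma prod_sq_poly_uminus_image: "prod_sq_poly (uminus ` S) = prod_sq_poly S"
  by (simp add: prod_sq_poly_def prod.reindex inj_on_def)

lemma poly_prod_sq_poly_nonzero:
  fixes w :: "'a::idom"
  shows "finite S \<Longrightarrow> poly (prod_sq_poly (S - {w, - w})) (w\<^sup>2) \<noteq> 0"
  by (auto simp: prod_sq_poly_def poly_prod power2_eq_iff)

lemma linear_square_bezout:
  fixes Q :: "'a::field poly"
  assumes "poly Q a \<noteq> 0"
  obtains u v where "u * [:-a, 1:]\<^sup>2 + v * Q = 1"
proof -
  define r where "r = poly Q a"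
  have "poly (Q - [:r:]) a = 0"
    by (simp add: r_def)
  then obtain T where T: "Q - [:r:] = [:-a, 1:] * T"
    by (metis dvdE poly_eq_0_iff_dvd)
  define S where "S = [:inverse r:] * T"
  have ring_identity: "x * x * y\<^sup>2 + (1 - y * x) * (1 + y * x) = (1 :: 'a poly)" for x y
    by (simp add: algebra_simps power2_eq_square)
  have "[:inverse r:] * Q = [:inverse r:] * (Q - [:r:]) + [:inverse r * r:]"
    by (simp add: algebra_simps)
  also have "\<dots> = 1 + [:-a, 1:] * S"
    using assms by (simp add: T S_def one_pCons mult.left_commute flip: r_def)
  finally have "(S * S) * [:-a, 1:]\<^sup>2 + ((1 - [:-a, 1:] * S) * [:inverse r:]) * Q
      = (S * S) * [:-a, 1:]\<^sup>2 + (1 - [:-a, 1:] * S) * (1 + [:-a, 1:] * S)"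
    by (simp only: mult.assoc)
  also have "\<dots> = 1"
    using ring_identity by blast
  finally show ?thesis
    using that by blast
qed

context
  fixes p :: nat
  assumes CHAR_eq: "CHAR('k::field) = p" and p_gt_2: "p > 2"
begin

lemma prime_CHAR_eq: "prime p"
  using prime_CHAR_semidom[where 'a = 'k] CHAR_eq p_gt_2 by simp

lemma two_neq_zero_CHAR: "(2::'k) \<noteq> 0"
  using of_nat_eq_0_iff_char_dvd[of 2, where 'a = 'k] CHAR_eq p_gt_2
  by (auto dest: dvd_imp_le)

lemma of_nat_eq_iff_less_CHAR:
  "i < p \<Longrightarrow> j < p \<Longrightarrow> (of_nat i :: 'k) = of_nat j \<longleftrightarrow> i = j"
  using inj_on_of_nat_CHAR[where 'a = 'k] CHAR_eq by (auto dest: inj_onD)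

lemma weight_in_prime_subring:
  "a \<in> prime_subring \<Longrightarrow> a - 1 - 2 * of_nat j \<in> (prime_subring :: 'k set)"
  by (auto intro: range_eqI[of _ _ "_ - 1 - 2 * int j"])

lemma inj_on_weights: "inj_on (\<lambda>j. a - 1 - 2 * of_nat j :: 'k) {..<p}"
  by (rule inj_onI) (use two_neq_zero_CHAR of_nat_eq_iff_less_CHAR in auto)

lemma ef_power_poly_eq_prod_sq_poly:
  "k \<le> p \<Longrightarrow> ef_power_poly (a::'k) k = prod_sq_poly ((\<lambda>j. a - 1 - 2 * of_nat j) ` {..<k})"
  unfolding ef_power_poly_def prod_sq_poly_def
  by (subst prod.reindex) (auto intro: inj_on_subset[OF inj_on_weights])

lemma weights_eq_prime_subring:
  assumes "a \<in> prime_subring"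
  shows "(\<lambda>j. a - 1 - 2 * of_nat j) ` {..<p} = (prime_subring :: 'k set)"
proof (rule card_subset_eq)
  show "finite (prime_subring :: 'k set)"
    using CHAR_eq p_gt_2 by (simp add: finite_prime_subring)
  show "(\<lambda>j. a - 1 - 2 * of_nat j) ` {..<p} \<subseteq> prime_subring"
    using assms weight_in_prime_subring by auto
  show "card ((\<lambda>j. a - 1 - 2 * of_nat j) ` {..<p}) = card (prime_subring :: 'k set)"
    using CHAR_eq p_gt_2 by (simp add: card_image inj_on_weights card_prime_subring)
qed

lemma ef_power_poly_CHAR:
  "a \<in> prime_subring \<Longrightarrow> ef_power_poly (a::'k) p = prod_sq_poly prime_subring"
  by (simp add: ef_power_poly_eq_prod_sq_poly weights_eq_prime_subring)

lemma weights_not_opposite: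
  assumes "2 * \<omega> < p" and "i < \<omega>" and "j < \<omega>"
    and "a - 1 - 2 * of_nat i = (of_nat \<omega> :: 'k)"
  shows "a - 1 - 2 * of_nat j \<noteq> - of_nat \<omega>"
proof
  assume "a - 1 - 2 * of_nat j = - of_nat \<omega>"
  with assms(4) have "2 * ((of_nat j :: 'k) - of_nat (i + \<omega>)) = 0"
    by (simp add: algebra_simps)
  then have "(of_nat j :: 'k) - of_nat (i + \<omega>) = 0"
    using two_neq_zero_CHAR by (metis mult_eq_0_iff)
  then have "(of_nat j :: 'k) = of_nat (i + \<omega>)"
    by (simp only: right_minus_eq)
  moreover have "j < p" and "i + \<omega> < p"
    using assms(1-3) by linarith+
  ultimately have "j = i + \<omega>"
    using of_nat_eq_iff_less_CHAR by blast
  then show False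
    using assms(3) by simp
qed

lemma ef_power_poly_dvd:
  assumes "2 * \<omega> < p" and a: "a \<in> prime_subring"
  shows "ef_power_poly (a::'k) \<omega> dvd prod_sq_poly (prime_subring - {of_nat \<omega>})"
proof -
  define W where "W = (\<lambda>j. a - 1 - 2 * of_nat j) ` {..<\<omega>}"
  have fin: "finite (prime_subring :: 'k set)"
    using CHAR_eq p_gt_2 by (simp add: finite_prime_subring)
  have W: "W \<subseteq> prime_subring"
    using a weight_in_prime_subring by (auto simp: W_def)
  have not_both: "\<not> (of_nat \<omega> \<in> W \<and> - of_nat \<omega> \<in> W)"
  proof
    assume "of_nat \<omega> \<in> W \<and> - of_nat \<omega> \<in> W"
    then obtain i j where ij: "i < \<omega>" "j < \<omega>"
      and "of_nat \<omega> = a - 1 - 2 * of_nat i" and "- of_nat \<omega> = a - 1 - 2 * of_nat j"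
      unfolding W_def by blast
    then show False
      using weights_not_opposite[OF assms(1) ij] by metis
  qed
  have "prod_sq_poly W dvd prod_sq_poly (prime_subring - {of_nat \<omega>})"
  proof (cases "of_nat \<omega> \<in> W")
    case False
    then show ?thesis
      using W fin by (intro prod_sq_poly_dvd) auto
  next
    case True
    then have "W \<subseteq> uminus ` (prime_subring - {of_nat \<omega>})"
      using W not_both by (auto simp: uminus_prime_subring_remove)
    then have "prod_sq_poly W dvd prod_sq_poly (uminus ` (prime_subring - {of_nat \<omega>}))"
      using fin by (intro prod_sq_poly_dvd) auto
    then show ?thesis
      by (simp only: prod_sq_poly_uminus_image)
  qed
  then show ?thesis
    using assms(1) by (simp add: W_def ef_power_poly_eq_prod_sq_poly)
qed

lemma prod_sq_poly_remove_opposite: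
  assumes "1 \<le> \<omega>" and "2 * \<omega> < p"
  shows "prod_sq_poly (prime_subring - {of_nat \<omega>})
    = [:-(of_nat \<omega> ^ 2), 1:] * prod_sq_poly (prime_subring - {of_nat \<omega>, - of_nat \<omega> :: 'k})"
proof -
  have "(of_nat \<omega> :: 'k) + of_nat \<omega> \<noteq> 0"
    using of_nat_eq_iff_less_CHAR[of "\<omega> + \<omega>" 0] assms by simp
  then have "(of_nat \<omega> :: 'k) \<noteq> - of_nat \<omega>"
    by (metis add.right_inverse)
  moreover have "- of_nat \<omega> \<in> (prime_subring :: 'k set)"
    by (auto intro: range_eqI[of _ _ "- int \<omega>"])
  ultimately show ?thesis
    using prod_sq_poly_remove[of "prime_subring - {of_nat \<omega>}" "- of_nat \<omega> :: 'k"]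
      CHAR_eq p_gt_2 by (simp add: finite_prime_subring insert_commute set_diff_eq)
qed

end

section \<open>Weight projections in \<open>U\<^sub>0(sl\<^sub>2)\<close>\<close>

locale U0_sl2 = k_algebra \<phi> for \<phi> :: "'k::field \<Rightarrow> 'a::ring_1" +
  fixes e f h :: 'a and p :: nat
  assumes U0_sl2_alg: "U0_sl2_alg p \<phi> e f h"
    and CHAR_eq: "CHAR('k) = p" and p_gt_2: "p > 2"
begin

sublocale sl2_triple e f h
  using U0_sl2_alg by unfold_locales (simp_all add: U0_sl2_alg_def)

lemma generated: "subalg_gen \<phi> {e, f, h} = UNIV"
  and e_power_p: "e ^ p = 0"
  and h_power_p: "h ^ p = h"
  using U0_sl2_alg by (simp_all add: U0_sl2_alg_def)

abbreviation c :: 'a where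
  "c \<equiv> casimir e f h"

lemma casimir_central: "c * y = y * c"
proof -
  have "y \<in> subalg_gen \<phi> {e, f, h}"
    using generated by simp
  then show ?thesis
  proof (induction y rule: subalg_gen.induct)
    case (scal x)
    then show ?case using map_central[of x c] by simp
  next
    case (gen s)
    then show ?case using casimir_commute_e casimir_commute_f casimir_commute_h by auto
  next
    case (add a b)
    then show ?case by (simp add: algebra_simps)
  next
    case (mult a b)
    then show ?case by (metis mult.assoc)
  qed
qed

lemma aeval_casimir_central: "aeval c P * y = y * aeval c P"
  by (rule aeval_commute) (rule casimir_central)

lemma prime_CHAR: "prime CHAR('k)"
  using prime_CHAR_eq[OF CHAR_eq p_gt_2] CHAR_eq by simp

definition weight_proj :: "'k \<Rightarrow> 'a" where
  "weight_proj a = 1 - (h - \<phi> a) ^ (p - 1)"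

lemma h_weight_proj:
  assumes "a \<in> prime_subring"
  shows "h * weight_proj a = \<phi> a * weight_proj a"
proof -
  have "(h - \<phi> a) ^ p = aeval h ([:-a, 1:] ^ CHAR('k))"
    by (simp only: aeval_power aeval_linear CHAR_eq)
  also have "\<dots> = h - \<phi> a"
    using linear_poly_power_CHAR[OF prime_CHAR assms] h_power_p by (simp add: CHAR_eq)
  finally have "(h - \<phi> a) * (h - \<phi> a) ^ (p - 1) = h - \<phi> a"
    using p_gt_2 by (simp flip: power_Suc)
  then have "(h - \<phi> a) * weight_proj a = 0"
    by (simp add: weight_proj_def right_diff_distrib)
  then show ?thesis
    by (simp add: algebra_simps)
qed

lemma sum_weight_proj: "(\<Sum>a\<in>prime_subring. weight_proj a) = 1"
proof -
  have "weight_proj a = aeval h (1 - [:-a, 1:] ^ (CHAR('k) - 1))" for a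
    by (simp only: weight_proj_def aeval_diff aeval_1 aeval_power aeval_linear CHAR_eq)
  then have "(\<Sum>a\<in>prime_subring. weight_proj a)
      = aeval h (\<Sum>a\<in>prime_subring. 1 - [:-a, 1:] ^ (CHAR('k) - 1))"
    by (simp only: aeval_sum)
  also have "\<dots> = 1"
    by (simp only: sum_prime_subring_lagrange[OF prime_CHAR] aeval_1)
  finally show ?thesis .
qed

lemma weight_proj_commute: "y * h = h * y \<Longrightarrow> weight_proj a * y = y * weight_proj a"
proof -
  assume "y * h = h * y"
  then have "(h - \<phi> a) * y = y * (h - \<phi> a)"
    by (simp add: algebra_simps map_central)
  then show ?thesis
    by (simp add: weight_proj_def algebra_simps power_commuting_commutes)
qed

lemma weight_proj_f: "weight_proj a * f = f * weight_proj (a + 2)"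
proof -
  have shift: "(h - \<phi> a) * f = f * (h - \<phi> (a + 2))"
    by (simp add: algebra_simps fh_reorder map_central[of a f] numeral_mult_commute[of _ f])
  have "(h - \<phi> a) ^ n * f = f * (h - \<phi> (a + 2)) ^ n" for n
  proof (induction n)
    case (Suc n)
    have "(h - \<phi> a) ^ Suc n * f = ((h - \<phi> a) * f) * (h - \<phi> (a + 2)) ^ n"
      by (simp only: power_Suc mult.assoc Suc.IH)
    also have "\<dots> = f * (h - \<phi> (a + 2)) ^ Suc n"
      by (simp only: shift power_Suc mult.assoc)
    finally show ?case .
  qed simp
  then show ?thesis
    by (simp add: weight_proj_def algebra_simps)
qed

lemma weight_proj_4ef:
  assumes "a \<in> prime_subring"
  shows "4 * (e * (f * weight_proj a)) = aeval c [:-((a - 1)\<^sup>2), 1:] * weight_proj a"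
proof -
  have h1: "(h - 1) * weight_proj a = \<phi> (a - 1) * weight_proj a"
    using h_weight_proj[OF assms] by (simp add: left_diff_distrib)
  have "(h - 1)\<^sup>2 * weight_proj a = (h - 1) * \<phi> (a - 1) * weight_proj a"
    by (simp only: power2_eq_square mult.assoc h1)
  also have "\<dots> = \<phi> ((a - 1)\<^sup>2) * weight_proj a"
    by (simp only: map_central[of "a - 1" "h - 1", symmetric] mult.assoc h1)
      (simp only: power2_eq_square map_mult mult.assoc)
  finally have h1_sq: "(h - 1)\<^sup>2 * weight_proj a = \<phi> ((a - 1)\<^sup>2) * weight_proj a" .
  have "4 * (e * (f * weight_proj a)) = (c - (h - 1)\<^sup>2) * weight_proj a"
    by (simp add: casimir_def mult.assoc)
  also have "\<dots> = aeval c [:-((a - 1)\<^sup>2), 1:] * weight_proj a"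
    by (simp only: left_diff_distrib h1_sq) (simp add: algebra_simps)
  finally show ?thesis .
qed

text \<open>On the weight space of weight \<open>a\<close>, \<open>4ef\<close> acts as \<open>c - (a - 1)\<^sup>2\<close> and \<open>f\<close> lowers
  the weight by 2; this is where the factors of \<^const>\<open>ef_power_poly\<close> come from.\<close>

lemma ef_power_weight_proj:
  assumes "a \<in> prime_subring"
  shows "(4 * e) ^ k * f ^ k * weight_proj a = aeval c (ef_power_poly a k) * weight_proj a"
  using assms
proof (induction k arbitrary: a)
  case 0
  then show ?case by (simp add: ef_power_poly_def)
next
  case (Suc k)
  let ?d = weight_proj and ?R = "aeval c (ef_power_poly (a - 2) k)"
  have "a - 2 \<in> prime_subring"
    using Suc.prems by (auto intro: range_eqI[of _ _ "_ - 2"])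
  have f_d: "f * ?d a = ?d (a - 2) * f"
    using weight_proj_f[of "a - 2"] by simp
  have "(4 * e) ^ Suc k * f ^ Suc k * ?d a = 4 * e * ((4 * e) ^ k * f ^ k * ?d (a - 2) * f)"
    by (simp only: power_Suc[of "4 * e"] power_Suc2[of f] f_d mult.assoc)
  also have "\<dots> = 4 * e * (?R * ?d (a - 2) * f)"
    by (simp only: Suc.IH[OF \<open>a - 2 \<in> prime_subring\<close>])
  also have "\<dots> = ?R * (4 * (e * (f * ?d a)))"
  proof -
    have "4 * (e * (?R * x)) = ?R * (4 * (e * x))" for x
      using aeval_casimir_central[of "ef_power_poly (a - 2) k" "4 * e"] by (metis mult.assoc)
    then show ?thesis
      by (simp only: f_d mult.assoc)
  qed
  also have "\<dots> = ?R * (aeval c [:-((a - 1)\<^sup>2), 1:] * ?d a)"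
    by (simp only: weight_proj_4ef[OF Suc.prems])
  also have "\<dots> = aeval c (ef_power_poly a (Suc k)) * ?d a"
    by (simp only: ef_power_poly_Suc aeval_mult mult.assoc[symmetric]
        aeval_casimir_central[of "ef_power_poly (a - 2) k"])
  finally show ?case .
qed

lemma annihilated_by_weight_projs:
  assumes "\<And>a. a \<in> prime_subring \<Longrightarrow> X * aeval c (P a) * weight_proj a = 0"
    and "\<And>a. a \<in> prime_subring \<Longrightarrow> P a dvd M"
  shows "X * aeval c M = 0"
proof -
  have "X * aeval c M * weight_proj a = 0" if a: "a \<in> prime_subring" for a
  proof -
    obtain S where "M = P a * S"
      using assms(2)[OF a] by (elim dvdE)
    then have "X * aeval c M * weight_proj a = X * aeval c (P a) * weight_proj a * aeval c S"
      using weight_proj_commute[OF aeval_casimir_central[of _ h]] by (simp add: mult.assoc)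
    then show ?thesis
      using assms(1)[OF a] by simp
  qed
  then have "(\<Sum>a\<in>prime_subring. X * aeval c M * weight_proj a) = 0"
    by simp
  then show ?thesis
    by (simp add: sum_weight_proj flip: sum_distrib_left)
qed

lemma casimir_annihilated: "aeval c (prod_sq_poly prime_subring) = 0"
proof -
  have "1 * aeval c (ef_power_poly a p) * weight_proj a = 0" if "a \<in> prime_subring" for a
    using ef_power_weight_proj[OF that, of p] e_power_p
    by (simp add: power_mult_commuting[OF numeral_mult_commute])
  then show ?thesis
    using annihilated_by_weight_projs[of 1 "\<lambda>a. ef_power_poly a p"]
      ef_power_poly_CHAR[OF CHAR_eq p_gt_2] by simp
qed

lemma e_power_annihilates:
  assumes "2 * \<omega> < p"
  shows "e ^ (p - \<omega>) * aeval c (prod_sq_poly (prime_subring - {of_nat \<omega>})) = 0"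
proof (rule annihilated_by_weight_projs)
  fix a :: 'k assume "a \<in> prime_subring"
  have "e ^ (p - \<omega>) * e ^ \<omega> = 0"
    using assms e_power_p by (simp flip: power_add)
  then have "e ^ (p - \<omega>) * (4 * e) ^ \<omega> = 0"
    by (simp add: power_mult_commuting[OF numeral_mult_commute] numeral_power_mult_commute
        flip: mult.assoc)
  then show "e ^ (p - \<omega>) * aeval c (ef_power_poly a \<omega>) * weight_proj a = 0"
    by (simp add: mult.assoc ef_power_weight_proj[OF \<open>a \<in> prime_subring\<close>, symmetric]
        flip: mult.assoc[of "e ^ (p - \<omega>)"])
next
  fix a :: 'k assume "a \<in> prime_subring"
  then show "ef_power_poly a \<omega> dvd prod_sq_poly (prime_subring - {of_nat \<omega>})"
    by (rule ef_power_poly_dvd[OF CHAR_eq p_gt_2 assms])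
qed

lemma block_idem_e_power_casimir:
  assumes "1 \<le> \<omega>" and "2 * \<omega> < p" and \<alpha>: "\<phi> (of_nat \<omega> ^ 2) = of_int \<alpha>"
  shows "block_idem e f h \<alpha> * e ^ (p - \<omega>) * (c - of_int \<alpha>) = 0"
proof -
  define w where "w = (of_nat \<omega> :: 'k)"
  define L where "L = [:-(w\<^sup>2), 1:]"
  define Q where "Q = prod_sq_poly (prime_subring - {w, -w})"
  have fin: "finite (prime_subring :: 'k set)"
    using CHAR_eq p_gt_2 by (simp add: finite_prime_subring)
  have LQ: "prod_sq_poly (prime_subring - {w}) = L * Q"
    using prod_sq_poly_remove_opposite[OF CHAR_eq p_gt_2 assms(1,2)] by (simp add: L_def Q_def w_def)
  have "w \<in> prime_subring"
    by (auto simp: w_def intro: range_eqI[of _ _ "int \<omega>"])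
  then have K: "prod_sq_poly prime_subring = L\<^sup>2 * Q"
    using prod_sq_poly_remove[OF fin] LQ
    by (simp only: L_def[symmetric] power2_eq_square[of L] mult.assoc)
  obtain u v where bezout: "u * L\<^sup>2 + v * Q = 1"
    using linear_square_bezout poly_prod_sq_poly_nonzero[OF fin, of w]
    unfolding L_def Q_def by blast
  have t: "aeval c L = c - of_int \<alpha>"
    using \<alpha> by (simp add: L_def w_def)
  have "block_idem e f h \<alpha> = aeval c (v * Q)"
    using block_idempotent_aeval[OF casimir_central bezout] casimir_annihilated K t
    by (intro block_idem_eqI casimir_central) simp
  then have "block_idem e f h \<alpha> * e ^ (p - \<omega>) * (c - of_int \<alpha>)
      = e ^ (p - \<omega>) * aeval c (prod_sq_poly (prime_subring - {w})) * aeval c v"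
    by (simp add: LQ mult.assoc flip: t) (metis mult.assoc aeval_casimir_central)
  also have "\<dots> = 0"
    using e_power_annihilates[OF assms(2)] by (simp add: w_def)
  finally show ?thesis .
qed

end

theorem lemma4p9:
  fixes \<phi> :: "'k::alg_closed_field \<Rightarrow> 'a::ring_1"
    and e f h :: 'a and p :: nat and \<alpha> :: int and \<omega> :: nat
  assumes "CHAR('k) = p" and "p > 2"
    and "U0_sl2_alg p \<phi> e f h"
    and "\<not> int p dvd \<alpha>"
    and "1 \<le> \<omega>" and "\<omega> \<le> (p - 1) div 2"
    and "int \<omega> ^ 2 mod int p = \<alpha> mod int p"
  shows "block_idem e f h \<alpha> * e ^ (p - \<omega>) * (casimir e f h - of_int \<alpha>) = 0"
proof -
  interpret U0_sl2 \<phi> e f h p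
    using assms(1-3) by unfold_locales (simp_all add: U0_sl2_alg_def)
  have "2 * \<omega> < p"
    using assms(2,6) by linarith
  have "(of_nat \<omega> ^ 2 :: 'k) = of_int \<alpha>"
    using assms(1,7) of_int_eq_iff_cong_CHAR[of "int \<omega> ^ 2" \<alpha>, where 'a = 'k]
    by (simp add: cong_def)
  then have "\<phi> (of_nat \<omega> ^ 2) = of_int \<alpha>"
    by simp
  then show ?thesis
    by (rule block_idem_e_power_casimir[OF assms(5) \<open>2 * \<omega> < p\<close>])
qed

end
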